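(* Let $1<t'<t$ be real, let $X$ be feasible for $Q(t)$ and let $x=\operatorname{diag}(X)$. Set $\alpha=\frac{t'(t'-1)}{t(t-1)}$ and $\beta=\frac{t'(t-t')}{t(t-1)}$. Then $X':=\alpha X+\beta\operatorname{Diag}(x)$ is feasible for $Q(t')$.
   Context: Let $G$ be a simple graph with vertex set $V=\{1,\dots,n\}$, edge set $E$ and adjacency matrix $A$. Let $e$ be the all-ones vector, $\langle M,N\rangle=\operatorname{trace}(M^TN)$, $X\geq 0$ mean entrywise nonnegativity, and $\operatorname{Diag}(x)$ the diagonal matrix with diagonal $x$. For real $t\geq 1$, $Q(t)$ is the semidefinite program $$\min \tfrac12\langle A,X\rangle\ \text{ s.t. } X\succeq 0,\ X\geq 0,\ \operatorname{trace}(X)=t,\ Xe=t\operatorname{diag}(X)$$ over symmetric $n\times n$ matrices $X$; "feasible for $Q(t)$" means satisfying these constraints. *)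

theory Defs
  imports "HOL-Analysis.Analysis"
begin

definition psd :: "real^'n^'n \<Rightarrow> bool" where
  "psd X \<longleftrightarrow> transpose X = X \<and> (\<forall>v. 0 \<le> v \<bullet> (X *v v))"

definition mdiag :: "real^'n^'n \<Rightarrow> real^'n" where
  "mdiag X = (\<chi> i. X $ i $ i)"

definition Diag :: "real^'n \<Rightarrow> real^'n^'n" where
  "Diag x = (\<chi> i j. if i = j then x $ i else 0)"

definition mtrace :: "real^'n^'n \<Rightarrow> real" where
  "mtrace X = (\<Sum>i\<in>UNIV. X $ i $ i)"

definition feasible_Q :: "real \<Rightarrow> real^'n^'n \<Rightarrow> bool" where
  "feasible_Q t X \<longleftrightarrow> transpose X = X \<and> psd X \<and> (\<forall>i j. 0 \<le> X $ i $ j)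
     \<and> mtrace X = t \<and> X *v (\<chi> i. 1) = t *\<^sub>R mdiag X"

end

theory Submission
  imports Defs
begin

text \<open>Adding a nonnegative multiple of Diag(diag X) to a nonnegative multiple of X keeps the
  matrix symmetric, positive semidefinite and entrywise nonnegative, and scales its diagonal
  by the sum of the two weights. Trace and row sums then behave linearly, so feasibility for
  Q(t') reduces to two scalar identities for the weights \<alpha> and \<beta>:
  (\<alpha> + \<beta>) t = t' and \<alpha> t + \<beta> = t' (\<alpha> + \<beta>).\<close>

lemma transpose_add: "transpose (A + B) = transpose A + transpose (B :: 'a::semiring_1^'n^'n)"
  by (simp add: transpose_def vec_eq_iff)

lemma transpose_Diag [simp]: "transpose (Diag x) = Diag x"
  by (simp add: transpose_def Diag_def vec_eq_iff)

lemma Diag_mult_vector: "Diag x *v v = (\<chi> i. x $ i * v $ i)"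
  by (simp add: vec_eq_iff matrix_vector_mult_def Diag_def if_distrib[of "\<lambda>z. z * _"] cong: if_cong)

lemma Diag_mult_vector_ones [simp]: "Diag x *v (\<chi> i. 1) = x"
  by (simp add: Diag_mult_vector)

lemma mdiag_add: "mdiag (X + Y) = mdiag X + mdiag Y"
  by (simp add: mdiag_def vec_eq_iff)

lemma mdiag_scaleR: "mdiag (c *\<^sub>R X) = c *\<^sub>R mdiag X"
  by (simp add: mdiag_def vec_eq_iff)

lemma mdiag_Diag [simp]: "mdiag (Diag x) = x"
  by (simp add: mdiag_def Diag_def vec_eq_iff)

lemma mtrace_eq_sum_mdiag: "mtrace X = (\<Sum>i\<in>UNIV. mdiag X $ i)"
  by (simp add: mtrace_def mdiag_def)

lemma psd_add: "psd X \<Longrightarrow> psd Y \<Longrightarrow> psd (X + Y)"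
  by (simp add: psd_def transpose_add matrix_vector_mult_add_rdistrib inner_add_right)

lemma psd_scaleR: "0 \<le> c \<Longrightarrow> psd X \<Longrightarrow> psd (c *\<^sub>R X)"
  by (simp add: psd_def transpose_scalar scaleR_matrix_vector_assoc[symmetric])

lemma psd_Diag:
  assumes "\<And>i. 0 \<le> x $ i"
  shows "psd (Diag x)"
proof -
  have "v \<bullet> (Diag x *v v) = (\<Sum>i\<in>UNIV. x $ i * (v $ i)\<^sup>2)" for v
    by (simp add: inner_vec_def Diag_mult_vector power2_eq_square mult.left_commute)
  then show ?thesis
    using assms by (simp add: psd_def sum_nonneg)
qed

lemma feasible_Q_add_diagonal:
  fixes X :: "real^'n^'n"
  assumes X: "feasible_Q t X" and "0 \<le> a" "0 \<le> b"
    and trace_weights: "(a + b) * t = s" and row_weights: "a * t + b = s * (a + b)"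
  shows "feasible_Q s (a *\<^sub>R X + b *\<^sub>R Diag (mdiag X))"
proof -
  let ?Y = "a *\<^sub>R X + b *\<^sub>R Diag (mdiag X)"
  have nonneg: "\<forall>i j. 0 \<le> X $ i $ j" and psd: "psd X" and tr: "mtrace X = t"
    and rows: "X *v (\<chi> i. 1) = t *\<^sub>R mdiag X"
    using X by (auto simp: feasible_Q_def)
  have diag_nonneg: "\<And>i. 0 \<le> mdiag X $ i"
    using nonneg by (simp add: mdiag_def)
  have "psd ?Y"
    using psd psd_Diag[OF diag_nonneg] \<open>0 \<le> a\<close> \<open>0 \<le> b\<close> by (intro psd_add psd_scaleR)
  moreover have "\<forall>i j. 0 \<le> ?Y $ i $ j"
    using nonneg diag_nonneg \<open>0 \<le> a\<close> \<open>0 \<le> b\<close> by (simp add: Diag_def)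
  moreover have diag: "mdiag ?Y = (a + b) *\<^sub>R mdiag X"
    by (simp add: mdiag_add mdiag_scaleR scaleR_add_left)
  moreover have "mtrace ?Y = s"
    using tr trace_weights
    by (simp add: mtrace_eq_sum_mdiag diag sum_distrib_left[symmetric] mult.commute)
  moreover have "?Y *v (\<chi> i. 1) = s *\<^sub>R mdiag ?Y"
  proof -
    have "?Y *v (\<chi> i. 1) = a *\<^sub>R (X *v (\<chi> i. 1)) + b *\<^sub>R (Diag (mdiag X) *v (\<chi> i. 1))"
      by (simp add: matrix_vector_mult_add_rdistrib scaleR_matrix_vector_assoc[symmetric])
    also have "\<dots> = (a * t + b) *\<^sub>R mdiag X"
      by (simp add: rows Diag_mult_vector_ones scaleR_add_left)
    finally show ?thesis
      by (simp add: row_weights diag)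
  qed
  ultimately show ?thesis
    unfolding feasible_Q_def using psd_def by blast
qed

theorem mainTheorem9:
  fixes X :: "real^'n^'n" and t t' :: real
  assumes "1 < t'" "t' < t" "feasible_Q t X"
  shows "feasible_Q t'
    ((t' * (t' - 1) / (t * (t - 1))) *\<^sub>R X + (t' * (t - t') / (t * (t - 1))) *\<^sub>R Diag (mdiag X))"
proof -
  define \<alpha> where "\<alpha> = t' * (t' - 1) / (t * (t - 1))"
  define \<beta> where "\<beta> = t' * (t - t') / (t * (t - 1))"
  have "t * (t - 1) \<noteq> 0"
    using assms by simp
  then have "(\<alpha> + \<beta>) * t = t'" "\<alpha> * t + \<beta> = t' * (\<alpha> + \<beta>)"
    unfolding \<alpha>_def \<beta>_def by (simp_all add: divide_simps) (simp_all add: algebra_simps)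
  moreover have "0 \<le> \<alpha>" "0 \<le> \<beta>"
    using assms unfolding \<alpha>_def \<beta>_def by simp_all
  ultimately show ?thesis
    unfolding \<alpha>_def[symmetric] \<beta>_def[symmetric]
    by (simp add: feasible_Q_add_diagonal[OF \<open>feasible_Q t X\<close>])
qed

end
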